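(* Let $q$ be an odd positive integer, let $n\ge2$, and let $s_1,\dots,s_n$ be positive integers. Let $\xi_1,\dots,\xi_n$ be i.i.d. random variables, each uniformly distributed on $\{k/q: k\in\mathbb Z,\ |k|\le (q-1)/2\}$, and let $X:=s_1\xi_1+\dots+s_n\xi_n$. Then \[ \Big|\mathbb E\big[\langle X\rangle^2\big]-\Big(\mathbb E[X^2]+\frac1{12}\Big)\Big|\le\frac{1+\sum_{k=1}^n s_k^3+(\min_k s_k)^2}{6q^2}\le\frac{\sum_{k=1}^n s_k^3}{3q^2}. \]
   Context: $\langle x\rangle:=\lfloor x+\tfrac12\rfloor$ denotes $x$ rounded to the nearest integer, with ties broken upward. *)

theory Defs
  imports "HOL-Probability.Probability"
begin

definition nint :: "real \<Rightarrow> int" where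
  "nint x = \<lfloor>x + 1/2\<rfloor>"

definition unif_grid :: "nat \<Rightarrow> real pmf" where
  "unif_grid q = pmf_of_set {real_of_int k / real q | k. \<bar>k\<bar> \<le> (int q - 1) div 2}"

definition iid_grid :: "nat \<Rightarrow> nat \<Rightarrow> (nat \<Rightarrow> real) pmf" where
  "iid_grid q n = Pi_pmf {..<n} 0 (\<lambda>_. unif_grid q)"

end

theory Submission
  imports Defs
begin

text \<open>
  Write xi_k = f_k / q with f_k independent and uniform on the centered residue system
  {-(q-1)/2..(q-1)/2}, put K = sum s_k f_k and let c be the centered residue of K modulo q.
  Then nint (K/q) = (K - c)/q, so rounding changes the square by (c^2 - 2 K c)/q^2.
  Modulo q, K is uniform on the multiples of d = gcd (s_1, ..., s_n, q), whence
  E c^2 = (q^2 - d^2)/12. Conditioning on f_k, the rest of K is uniform on the multiples of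
  g_k = gcd of q and the s_l with l \<noteq> k, so E (f_k c) averages f_k times the centered
  residue of s_k f_k modulo g_k; cutting the residues modulo q into blocks of length g_k and
  using AM-GM bounds it by g_k^2/12. Finally g_k <= s_(k+1) cyclically, so
  sum s_k g_k^2 <= sum s_k^3 by s g^2 <= s^3/3 + 2 g^3/3, and d <= min s_k.
\<close>

section \<open>Centered residue systems\<close>

definition radius :: "nat \<Rightarrow> int" where
  "radius M = (int M - 1) div 2"

definition centered :: "nat \<Rightarrow> int set" where
  "centered M = {- radius M..radius M}"

definition centered_mod :: "nat \<Rightarrow> int \<Rightarrow> int" where
  "centered_mod M x = (x + radius M) mod int M - radius M"

lemma radius_odd: "odd M \<Longrightarrow> int M = 2 * radius M + 1"
  by (elim oddE) (simp add: radius_def)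

lemma radius_nonneg: "odd M \<Longrightarrow> radius M \<ge> 0"
  using radius_odd[of M] by linarith

lemma mem_centered_iff: "x \<in> centered M \<longleftrightarrow> \<bar>x\<bar> \<le> radius M"
  unfolding centered_def by auto

lemma finite_centered [simp]: "finite (centered M)"
  unfolding centered_def by simp

lemma card_centered: "odd M \<Longrightarrow> card (centered M) = M"
  unfolding centered_def using radius_odd[of M] by simp

lemma centered_nonempty: "odd M \<Longrightarrow> centered M \<noteq> {}"
  using radius_nonneg[of M] unfolding centered_def by auto

lemma radius_mult:
  assumes "odd d" "odd N"
  shows "radius (d * N) = int d * radius N + radius d"
proof -
  have "2 * radius (d * N) + 1 = (2 * radius d + 1) * (2 * radius N + 1)"
    using radius_odd[of "d * N"] radius_odd[OF assms(1)] radius_odd[OF assms(2)] assms by simp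
  then show ?thesis
    using radius_odd[OF assms(1)] by (simp add: algebra_simps)
qed

lemma centered_mod_in_centered: "odd M \<Longrightarrow> centered_mod M x \<in> centered M"
  using radius_odd[of M] pos_mod_sign[of "int M" "x + radius M"] pos_mod_bound[of "int M" "x + radius M"]
  unfolding centered_mod_def centered_def by auto

lemma centered_mod_mod: "centered_mod M x mod int M = x mod int M"
  unfolding centered_mod_def by (simp add: mod_simps)

lemma centered_mod_dvd_diff: "int M dvd x - centered_mod M x"
  by (metis centered_mod_mod mod_eq_dvd_iff)

lemma centered_mod_eqI:
  assumes "odd M" "y \<in> centered M" "y mod int M = x mod int M"
  shows "centered_mod M x = y"
proof -
  have "(x + radius M) mod int M = (y + radius M) mod int M"
    using assms(3) by (metis mod_add_left_eq)
  also have "\<dots> = y + radius M"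
    using assms(2) radius_odd[OF assms(1)] unfolding centered_def by (intro mod_pos_pos_trivial) auto
  finally show ?thesis unfolding centered_mod_def by simp
qed

lemma centered_mod_centered: "odd M \<Longrightarrow> y \<in> centered M \<Longrightarrow> centered_mod M y = y"
  by (rule centered_mod_eqI) auto

lemma centered_mod_add_mult [simp]: "centered_mod M (x + k * int M) = centered_mod M x"
  unfolding centered_mod_def by (metis add.commute add.left_commute mod_mult_self1)

lemma centered_mod_add_self [simp]: "centered_mod M (x + int M) = centered_mod M x"
  using centered_mod_add_mult[of M x 1] by simp

lemma centered_mod_mult:
  assumes "odd d" "odd N"
  shows "centered_mod (d * N) (int d * i) = int d * centered_mod N i"
proof (rule centered_mod_eqI)
  show "odd (d * N)" using assms by simp
  have "\<bar>int d * centered_mod N i\<bar> \<le> int d * radius N"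
    using centered_mod_in_centered[OF assms(2), of i] by (simp add: mem_centered_iff abs_mult mult_left_mono)
  then show "int d * centered_mod N i \<in> centered (d * N)"
    unfolding mem_centered_iff radius_mult[OF assms] using radius_nonneg[OF assms(1)] by linarith
  have "int d * int N dvd int d * (centered_mod N i - i)"
    using centered_mod_dvd_diff[of N i] by (simp add: dvd_diff_commute)
  then show "int d * centered_mod N i mod int (d * N) = int d * i mod int (d * N)"
    by (simp only: mod_eq_dvd_iff of_nat_mult right_diff_distrib)
qed

lemma periodic_add_mult:
  assumes "\<And>x. \<phi> (x + int M) = \<phi> x"
  shows "\<phi> (x + k * int M) = \<phi> x"
proof (induction k arbitrary: x rule: int_induct[where k = 0])
  case (step1 i)
  then show ?case using assms[of "x + i * int M"] by (simp add: algebra_simps)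
next
  case (step2 i)
  then show ?case using assms[of "x + (i - 1) * int M"] by (simp add: algebra_simps)
qed simp

lemma periodic_centered_mod:
  assumes "\<And>x. \<phi> (x + int M) = \<phi> x"
  shows "\<phi> (centered_mod M x) = \<phi> x"
proof -
  obtain k where "x = centered_mod M x + k * int M"
    using centered_mod_dvd_diff[of M x] by (metis add.commute diff_add_cancel dvdE mult.commute)
  then show ?thesis using periodic_add_mult[of \<phi>, OF assms] by metis
qed

section \<open>Sums over centered residue systems\<close>

lemma sum_centered_shift:
  assumes "odd M" "\<And>x. \<phi> (x + int M) = \<phi> x"
  shows "(\<Sum>i\<in>centered M. \<phi> (i + c)) = (\<Sum>i\<in>centered M. \<phi> i :: real)"
proof -
  let ?\<tau> = "\<lambda>i. centered_mod M (i + c)"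
  have inj: "inj_on ?\<tau> (centered M)"
  proof (rule inj_onI)
    fix i j assume i: "i \<in> centered M" and j: "j \<in> centered M" and "?\<tau> i = ?\<tau> j"
    then have "i mod int M = j mod int M"
      by (metis centered_mod_mod mod_add_left_eq mod_add_right_eq add_diff_cancel_right' mod_diff_left_eq)
    then show "i = j" using centered_mod_eqI[OF assms(1) i] centered_mod_centered[OF assms(1) j] by metis
  qed
  have "(\<Sum>i\<in>centered M. \<phi> (i + c)) = (\<Sum>i\<in>centered M. \<phi> (?\<tau> i))"
    using periodic_centered_mod[of \<phi>, OF assms(2)] by simp
  also have "\<dots> = (\<Sum>i\<in>?\<tau> ` centered M. \<phi> i)"
    by (rule sum.reindex[OF inj, symmetric, unfolded comp_def])
  also have "?\<tau> ` centered M = centered M"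
    using inj centered_mod_in_centered[OF assms(1)] by (intro endo_inj_surj) auto
  finally show ?thesis .
qed

text \<open>Euclid's algorithm: shifting i by (a div b) * x turns a into a mod b, and swapping
  the two sums continues with (b, a mod b).\<close>

lemma sum_centered_linear_gcd2:
  assumes "odd M" "\<And>x. \<phi> (x + int M) = \<phi> x"
  shows "(\<Sum>x\<in>centered M. \<Sum>i\<in>centered M. \<phi> (y + int a * x + int b * i))
       = real M * (\<Sum>i\<in>centered M. \<phi> (y + int (gcd a b) * i) :: real)"
proof (induction a b arbitrary: y rule: gcd_nat_induct)
  case (base m)
  then show ?case using card_centered[OF assms(1)] by (simp add: sum_distrib_left)
next
  case (step m n)
  have m: "int m = int (m mod n) + int (m div n) * int n"
    by (metis div_mult_mod_eq add.commute of_nat_add of_nat_mult)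
  have "(\<Sum>i\<in>centered M. \<phi> (y + int m * x + int n * i))
      = (\<Sum>i\<in>centered M. \<phi> (y + int (m mod n) * x + int n * i))" for x
  proof -
    have "(\<Sum>i\<in>centered M. \<phi> (y + int m * x + int n * i))
        = (\<Sum>i\<in>centered M. \<phi> (y + int (m mod n) * x + int n * (i + int (m div n) * x)))"
      unfolding m by (simp add: algebra_simps)
    also have "\<dots> = (\<Sum>i\<in>centered M. \<phi> (y + int (m mod n) * x + int n * i))"
      by (rule sum_centered_shift[OF assms(1)])
         (metis periodic_add_mult[of \<phi>, OF assms(2)] distrib_left add.assoc mult.commute)
    finally show ?thesis .
  qed
  then have "(\<Sum>x\<in>centered M. \<Sum>i\<in>centered M. \<phi> (y + int m * x + int n * i))
      = (\<Sum>i\<in>centered M. \<Sum>x\<in>centered M. \<phi> (y + int n * i + int (m mod n) * x))"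
    by (subst sum.swap) (simp add: algebra_simps)
  also have "\<dots> = real M * (\<Sum>i\<in>centered M. \<phi> (y + int (gcd m n) * i))"
    using step.IH by (simp add: gcd_red_nat[of m n])
  finally show ?case .
qed

lemma sum_centered_linear_gcd:
  assumes "odd M" "\<And>x. \<phi> (x + int M) = \<phi> x"
  shows "(\<Sum>x\<in>centered M. \<phi> (y + int a * x)) = (\<Sum>x\<in>centered M. \<phi> (y + int (gcd a M) * x) :: real)"
proof -
  have "real M * (\<Sum>x\<in>centered M. \<phi> (y + int a * x))
      = (\<Sum>x\<in>centered M. \<Sum>i\<in>centered M. \<phi> (y + int a * x + int M * i))"
    using periodic_add_mult[of \<phi>, OF assms(2)] card_centered[OF assms(1)]
    by (simp add: mult.commute sum_distrib_left)
  also have "\<dots> = real M * (\<Sum>x\<in>centered M. \<phi> (y + int (gcd a M) * x))"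
    by (rule sum_centered_linear_gcd2[where \<phi> = \<phi>, OF assms])
  finally show ?thesis using assms(1) by (cases M) auto
qed

lemma centered_mult_decomp:
  assumes "odd d" "odd N"
  shows "inj_on (\<lambda>(t, b). t * int N + b) (centered d \<times> centered N)"
    and "(\<lambda>(t, b). t * int N + b) ` (centered d \<times> centered N) = centered (d * N)"
proof -
  let ?f = "\<lambda>(t, b). t * int N + b"
  show inj: "inj_on ?f (centered d \<times> centered N)"
  proof (rule inj_onI, clarify)
    fix t b t' b'
    assume b: "b \<in> centered N" "b' \<in> centered N" and eq: "t * int N + b = t' * int N + b'"
    have "b = b'"
      using arg_cong[OF eq, of "centered_mod N"] centered_mod_centered[OF assms(2)] b
      by (simp add: add.commute)
    moreover have "int N > 0" using assms(2) by (cases N) auto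
    ultimately show "t = t' \<and> b = b'" using eq by simp
  qed
  have "?f ` (centered d \<times> centered N) \<subseteq> centered (d * N)"
  proof clarify
    fix t b assume "t \<in> centered d" "b \<in> centered N"
    then have "\<bar>t\<bar> * int N \<le> radius d * int N" "\<bar>b\<bar> \<le> radius N"
      by (auto simp: mem_centered_iff intro: mult_right_mono)
    moreover have "radius d * int N + radius N = int d * radius N + radius d"
      using radius_odd[OF assms(1)] radius_odd[OF assms(2)] by (simp add: algebra_simps)
    ultimately show "t * int N + b \<in> centered (d * N)"
      unfolding mem_centered_iff radius_mult[OF assms]
      using abs_triangle_ineq[of "t * int N" b] by (simp add: abs_mult algebra_simps)
  qed
  moreover have "card (?f ` (centered d \<times> centered N)) = card (centered (d * N))"
    using assms by (simp add: card_image[OF inj] card_cartesian_product card_centered)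
  ultimately show "?f ` (centered d \<times> centered N) = centered (d * N)"
    by (simp add: card_subset_eq)
qed

lemma sum_centered_mult:
  assumes "odd d" "odd N"
  shows "(\<Sum>x\<in>centered (d * N). F x) = (\<Sum>t\<in>centered d. \<Sum>b\<in>centered N. F (t * int N + b) :: real)"
proof -
  have "(\<Sum>x\<in>centered (d * N). F x) = (\<Sum>p\<in>centered d \<times> centered N. F ((\<lambda>(t, b). t * int N + b) p))"
    by (subst centered_mult_decomp(2)[OF assms, symmetric])
       (rule sum.reindex[OF centered_mult_decomp(1)[OF assms], unfolded comp_def])
  then show ?thesis by (simp add: sum.cartesian_product case_prod_beta)
qed

lemma sum_centered_periodic:
  assumes "odd d" "odd N" "\<And>x. \<phi> (x + int N) = \<phi> x"
  shows "(\<Sum>x\<in>centered (d * N). \<phi> x) = real d * (\<Sum>b\<in>centered N. \<phi> b :: real)"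
  using periodic_add_mult[of \<phi>, OF assms(3)] card_centered[OF assms(1)]
  by (simp add: sum_centered_mult[OF assms(1,2)] add.commute)

lemma sum_centered: "(\<Sum>t\<in>centered M. real_of_int t) = 0"
proof -
  have "(\<Sum>t\<in>centered M. real_of_int t) = (\<Sum>t\<in>uminus ` centered M. real_of_int t)"
    unfolding centered_def by (simp add: image_uminus_atLeastAtMost)
  also have "\<dots> = - (\<Sum>t\<in>centered M. real_of_int t)"
    by (subst sum.reindex) (auto simp: inj_on_def sum_negf)
  finally show ?thesis by simp
qed

lemma sum_symmetric_interval_sq:
  "(\<Sum>i\<in>{- int h..int h}. real_of_int i ^ 2) = real h * (real h + 1) * (2 * real h + 1) / 3"
proof (induction h)
  case (Suc h)
  have "{- int (Suc h)..int (Suc h)} = insert (- int (Suc h)) (insert (int (Suc h)) {- int h..int h})"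
    by auto
  then show ?case using Suc by (simp add: algebra_simps power2_eq_square)
qed simp

lemma sum_centered_sq:
  assumes "odd M"
  shows "(\<Sum>i\<in>centered M. real_of_int i ^ 2) = real M * (real M ^ 2 - 1) / 12"
proof -
  obtain h where h: "radius M = int h" using radius_nonneg[OF assms] nonneg_eq_int by metis
  then have "real M = 2 * real h + 1" using radius_odd[OF assms] by linarith
  then show ?thesis
    unfolding centered_def h sum_symmetric_interval_sq by (simp add: algebra_simps power2_eq_square)
qed

lemma sum_centered_mod_mult_sq:
  assumes "odd q" "d dvd q"
  shows "(\<Sum>i\<in>centered q. real_of_int (centered_mod q (int d * i)) ^ 2)
       = real q * (real q ^ 2 - real d ^ 2) / 12"
proof -
  obtain N where q: "q = d * N" using assms(2) by (elim dvdE)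
  have odd: "odd d" "odd N" using assms(1) q by auto
  have "(\<Sum>i\<in>centered q. real_of_int (centered_mod q (int d * i)) ^ 2)
      = real d ^ 2 * (\<Sum>i\<in>centered (d * N). real_of_int (centered_mod N i) ^ 2)"
    unfolding q centered_mod_mult[OF odd] by (simp add: power_mult_distrib sum_distrib_left)
  also have "(\<Sum>i\<in>centered (d * N). real_of_int (centered_mod N i) ^ 2)
      = real d * (\<Sum>i\<in>centered N. real_of_int i ^ 2)"
    by (simp add: sum_centered_periodic[OF odd] centered_mod_centered[OF odd(2)])
  finally show ?thesis
    unfolding sum_centered_sq[OF odd(2)] q by (simp add: algebra_simps power2_eq_square)
qed

lemma sum_centered_mod_coset:
  assumes "odd q" "g dvd q"
  shows "(\<Sum>i\<in>centered q. real_of_int (centered_mod q (z + int g * i))) = real q * real_of_int (centered_mod g z)"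
proof -
  obtain N where q: "q = g * N" using assms(2) by (elim dvdE)
  have odd: "odd g" "odd N" using assms(1) q by auto
  define c where "c = centered_mod g z"
  obtain w where "z - c = int g * w"
    using centered_mod_dvd_diff[of g z] unfolding c_def by (elim dvdE)
  then have z: "z = c + int g * w" by simp
  have periodic: "centered_mod q (y + int g * (x + int N)) = centered_mod q (y + int g * x)" for y x
  proof -
    have "y + int g * (x + int N) = (y + int g * x) + int q"
      using q by (simp add: algebra_simps)
    then show ?thesis by (metis centered_mod_add_self)
  qed
  have "(\<Sum>i\<in>centered (g * N). real_of_int (centered_mod q (z + int g * i)))
      = real g * (\<Sum>i\<in>centered N. real_of_int (centered_mod q (z + int g * i)))"
    by (rule sum_centered_periodic[OF odd]) (simp add: periodic)
  also have "\<dots> = real g * (\<Sum>i\<in>centered N. real_of_int (centered_mod q (c + int g * (i + w))))"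
    by (simp add: z algebra_simps)
  also have "(\<Sum>i\<in>centered N. real_of_int (centered_mod q (c + int g * (i + w))))
      = (\<Sum>i\<in>centered N. real_of_int (centered_mod q (c + int g * i)))"
    by (rule sum_centered_shift[where \<phi> = "\<lambda>i. real_of_int (centered_mod q (c + int g * i))", OF odd(2)])
       (simp add: periodic)
  also have "\<dots> = (\<Sum>i\<in>centered N. real_of_int c + real g * real_of_int i)"
  proof (rule sum.cong[OF refl])
    fix i assume "i \<in> centered N"
    then have "\<bar>int g * i\<bar> \<le> int g * radius N"
      by (simp add: mem_centered_iff abs_mult mult_left_mono)
    moreover have "\<bar>c\<bar> \<le> radius g"
      using centered_mod_in_centered[OF odd(1)] unfolding c_def mem_centered_iff .
    ultimately have "c + int g * i \<in> centered (g * N)"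
      using abs_triangle_ineq[of c "int g * i"] unfolding mem_centered_iff radius_mult[OF odd] by linarith
    then show "real_of_int (centered_mod q (c + int g * i)) = real_of_int c + real g * real_of_int i"
      using q centered_mod_centered[OF assms(1)] by simp
  qed
  also have "\<dots> = real N * real_of_int c"
    using card_centered[OF odd(2)] sum_centered[of N] by (simp add: sum.distrib flip: sum_distrib_left)
  finally show ?thesis unfolding c_def q[symmetric] by (simp add: q)
qed

lemma abs_sum_centered_mul_centered_mod_le:
  assumes "odd g"
  shows "\<bar>\<Sum>b\<in>centered g. real_of_int b * real_of_int (centered_mod g (int s * b))\<bar>
       \<le> real g * (real g ^ 2 - 1) / 12"
proof -
  have "(\<Sum>b\<in>centered g. real_of_int (centered_mod g (int s * b)) ^ 2)
      = (\<Sum>b\<in>centered g. real_of_int (centered_mod g (0 + int (gcd s g) * b)) ^ 2)"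
    using sum_centered_linear_gcd[OF assms, of "\<lambda>x. real_of_int (centered_mod g x) ^ 2" 0 s] by simp
  also have "\<dots> = real g * (real g ^ 2 - real (gcd s g) ^ 2) / 12"
    using sum_centered_mod_mult_sq[OF assms, of "gcd s g"] by simp
  also have "\<dots> \<le> real g * (real g ^ 2 - 1) / 12"
  proof -
    have "1 \<le> real (gcd s g)" using assms by (cases g) (simp_all add: Suc_le_eq)
    then have "1 \<le> real (gcd s g) ^ 2" by (simp add: one_le_power)
    then show ?thesis by (intro divide_right_mono mult_left_mono) simp_all
  qed
  finally have sq: "(\<Sum>b\<in>centered g. real_of_int (centered_mod g (int s * b)) ^ 2)
      \<le> real g * (real g ^ 2 - 1) / 12" .
  have "\<bar>\<Sum>b\<in>centered g. real_of_int b * real_of_int (centered_mod g (int s * b))\<bar>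
      \<le> (\<Sum>b\<in>centered g. (real_of_int b ^ 2 + real_of_int (centered_mod g (int s * b)) ^ 2) / 2)"
  proof (intro order_trans[OF sum_abs] sum_mono)
    fix x y :: int
    show "\<bar>real_of_int x * real_of_int y\<bar> \<le> (real_of_int x ^ 2 + real_of_int y ^ 2) / 2"
      using sum_squares_bound[of "\<bar>real_of_int x\<bar>" "\<bar>real_of_int y\<bar>"] by (simp add: abs_mult)
  qed
  also have "\<dots> = ((\<Sum>b\<in>centered g. real_of_int b ^ 2)
      + (\<Sum>b\<in>centered g. real_of_int (centered_mod g (int s * b)) ^ 2)) / 2"
    by (simp only: sum.distrib flip: sum_divide_distrib)
  finally show ?thesis using sq sum_centered_sq[OF assms] by simp
qed

lemma abs_sum_centered_mul_centered_mod_dvd_le: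
  assumes "odd q" "g dvd q"
  shows "\<bar>\<Sum>x\<in>centered q. real_of_int x * real_of_int (centered_mod g (int s * x))\<bar>
       \<le> real q * (real g ^ 2 - 1) / 12"
proof -
  obtain N where q: "q = N * g" using assms(2) by (metis dvdE mult.commute)
  have odd: "odd N" "odd g" using assms(1) q by auto
  define c where "c b = real_of_int (centered_mod g (int s * b))" for b
  have c_periodic: "c (t * int g + b) = c b" for t b
  proof -
    have "int s * (t * int g + b) = int s * b + (int s * t) * int g"
      by (simp add: algebra_simps)
    then show ?thesis unfolding c_def by simp
  qed
  have "(\<Sum>x\<in>centered q. real_of_int x * c x)
      = (\<Sum>t\<in>centered N. \<Sum>b\<in>centered g. real_of_int t * real g * c b + real_of_int b * c b)"
    unfolding q sum_centered_mult[OF odd] c_periodic by (simp add: algebra_simps)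
  also have "\<dots> = (\<Sum>t\<in>centered N. real_of_int t * (real g * (\<Sum>b\<in>centered g. c b))
      + (\<Sum>b\<in>centered g. real_of_int b * c b))"
    by (simp add: sum.distrib sum_distrib_left mult.assoc)
  also have "\<dots> = (\<Sum>t\<in>centered N. real_of_int t) * (real g * (\<Sum>b\<in>centered g. c b))
      + real N * (\<Sum>b\<in>centered g. real_of_int b * c b)"
    using card_centered[OF odd(1)] by (simp add: sum.distrib sum_distrib_right)
  also have "\<dots> = real N * (\<Sum>b\<in>centered g. real_of_int b * c b)"
    by (simp add: sum_centered)
  finally have "\<bar>\<Sum>x\<in>centered q. real_of_int x * c x\<bar> = real N * \<bar>\<Sum>b\<in>centered g. real_of_int b * c b\<bar>"
    by (simp add: abs_mult)
  also have "\<dots> \<le> real N * (real g * (real g ^ 2 - 1) / 12)"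
    using abs_sum_centered_mul_centered_mod_le[OF odd(2)] unfolding c_def by (intro mult_left_mono) simp_all
  finally show ?thesis unfolding c_def q by (simp add: algebra_simps)
qed

section \<open>The distribution of the numerators\<close>

text \<open>The law of the integer numerators q * xi_k of the variables of iid_grid.\<close>

definition int_grid :: "nat \<Rightarrow> 'a set \<Rightarrow> ('a \<Rightarrow> int) pmf" where
  "int_grid q A = Pi_pmf A 0 (\<lambda>_. pmf_of_set (centered q))"

lemma finite_set_int_grid: "finite A \<Longrightarrow> odd q \<Longrightarrow> finite (set_pmf (int_grid q A))"
  unfolding int_grid_def using centered_nonempty[of q]
  by (subst set_Pi_pmf) (auto intro!: finite_PiE_dflt)

lemma expectation_int_grid_insert:
  assumes "finite A" "a \<notin> A" "odd q"
  shows "measure_pmf.expectation (int_grid q (insert a A)) (F :: _ \<Rightarrow> real)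
       = (\<Sum>x\<in>centered q. measure_pmf.expectation (int_grid q A) (\<lambda>f. F (f(a := x)))) / real q"
proof -
  have "int_grid q (insert a A) = pmf_of_set (centered q) \<bind> (\<lambda>x. map_pmf (\<lambda>f. f(a := x)) (int_grid q A))"
    unfolding int_grid_def using assms by (subst Pi_pmf_insert') (simp_all add: map_pmf_def)
  then show ?thesis
    using assms centered_nonempty[OF assms(3)] finite_set_int_grid[OF assms(1,3)] card_centered[OF assms(3)]
    by (simp add: pmf_expectation_bind_pmf_of_set divide_inverse_commute sum_distrib_left)
qed

lemma expectation_int_grid_periodic:
  assumes "finite A" "odd q" "\<And>x. \<phi> (x + int q) = \<phi> x"
  shows "measure_pmf.expectation (int_grid q A) (\<lambda>f. \<phi> (y + (\<Sum>k\<in>A. int (s k) * f k)))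
       = (\<Sum>i\<in>centered q. \<phi> (y + int (Gcd (s ` A)) * i) :: real) / real q"
  using assms(1)
proof (induction A arbitrary: y rule: finite_induct)
  case empty
  have "int_grid q {} = return_pmf (\<lambda>_. 0)" unfolding int_grid_def by simp
  then show ?case using card_centered[OF assms(2)] assms(2) by (cases q) auto
next
  case (insert a A)
  have "(\<Sum>k\<in>insert a A. int (s k) * (f(a := x)) k) = int (s a) * x + (\<Sum>k\<in>A. int (s k) * f k)"
    for f x using insert(1,2) by (subst sum.insert) (auto intro!: sum.cong)
  then have "measure_pmf.expectation (int_grid q (insert a A)) (\<lambda>f. \<phi> (y + (\<Sum>k\<in>insert a A. int (s k) * f k)))
      = (\<Sum>x\<in>centered q. measure_pmf.expectation (int_grid q A)
           (\<lambda>f. \<phi> ((y + int (s a) * x) + (\<Sum>k\<in>A. int (s k) * f k)))) / real q"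
    using insert(1,2) by (simp add: expectation_int_grid_insert assms(2) add.assoc)
  also have "\<dots> = (\<Sum>x\<in>centered q. \<Sum>i\<in>centered q. \<phi> (y + int (s a) * x + int (Gcd (s ` A)) * i))
      / real q / real q"
    by (simp add: insert.IH sum_divide_distrib)
  also have "\<dots> = (\<Sum>i\<in>centered q. \<phi> (y + int (Gcd (s ` insert a A)) * i)) / real q"
    using assms(2) by (simp add: sum_centered_linear_gcd2[where \<phi> = \<phi>, OF assms(2,3)] odd_pos)
  finally show ?case .
qed

lemma expectation_int_grid_centered_mod_sq:
  assumes "odd q" "finite A"
  shows "measure_pmf.expectation (int_grid q A) (\<lambda>f. real_of_int (centered_mod q (\<Sum>k\<in>A. int (s k) * f k)) ^ 2)
       = (real q ^ 2 - real (gcd (Gcd (s ` A)) q) ^ 2) / 12"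
proof -
  let ?\<phi> = "\<lambda>x. real_of_int (centered_mod q x) ^ 2"
  have periodic: "?\<phi> (x + int q) = ?\<phi> x" for x by simp
  have "measure_pmf.expectation (int_grid q A) (\<lambda>f. ?\<phi> (0 + (\<Sum>k\<in>A. int (s k) * f k)))
      = (\<Sum>i\<in>centered q. ?\<phi> (0 + int (Gcd (s ` A)) * i)) / real q"
    by (rule expectation_int_grid_periodic[where \<phi> = ?\<phi>, OF assms(2,1) periodic])
  also have "\<dots> = (\<Sum>i\<in>centered q. ?\<phi> (0 + int (gcd (Gcd (s ` A)) q) * i)) / real q"
    using sum_centered_linear_gcd[where \<phi> = ?\<phi>, OF assms(1) periodic, of 0 "Gcd (s ` A)"] by simp
  also have "\<dots> = (real q ^ 2 - real (gcd (Gcd (s ` A)) q) ^ 2) / 12"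
    using sum_centered_mod_mult_sq[OF assms(1), of "gcd (Gcd (s ` A)) q"] assms(1) by (simp add: odd_pos)
  finally show ?thesis by simp
qed

text \<open>Given f k = x, the rest of the sum is uniform modulo q on the multiples of
  g = gcd (Gcd (s ` (A - {k}))) q, so the conditional mean of the centered residue is the
  centered residue of s k * x modulo g.\<close>

lemma abs_expectation_int_grid_coord_centered_mod_le:
  assumes "odd q" "finite A" "k \<in> A"
  shows "\<bar>measure_pmf.expectation (int_grid q A)
           (\<lambda>f. real_of_int (f k) * real_of_int (centered_mod q (\<Sum>l\<in>A. int (s l) * f l)))\<bar>
       \<le> real (gcd (Gcd (s ` (A - {k}))) q) ^ 2 / 12"
proof -
  define B where "B = A - {k}"
  define g where "g = gcd (Gcd (s ` B)) q"
  let ?c = "\<lambda>x. real_of_int (centered_mod q x)"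
  have A: "A = insert k B" "finite B" "k \<notin> B" using assms(2,3) unfolding B_def by auto
  have periodic: "?c (x + int q) = ?c x" for x by simp
  have conditional: "measure_pmf.expectation (int_grid q B) (\<lambda>f. ?c (int (s k) * x + (\<Sum>l\<in>B. int (s l) * f l)))
      = real_of_int (centered_mod g (int (s k) * x))" for x
  proof -
    have "measure_pmf.expectation (int_grid q B) (\<lambda>f. ?c (int (s k) * x + (\<Sum>l\<in>B. int (s l) * f l)))
        = (\<Sum>i\<in>centered q. ?c (int (s k) * x + int g * i)) / real q"
      unfolding g_def expectation_int_grid_periodic[where \<phi> = ?c, OF A(2) assms(1) periodic]
      using sum_centered_linear_gcd[where \<phi> = ?c, OF assms(1) periodic, of "int (s k) * x" "Gcd (s ` B)"] by simp
    also have "\<dots> = real_of_int (centered_mod g (int (s k) * x))"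
      using sum_centered_mod_coset[OF assms(1), of g] assms(1) by (simp add: g_def odd_pos)
    finally show ?thesis .
  qed
  have "(\<Sum>l\<in>A. int (s l) * (f(k := x)) l) = int (s k) * x + (\<Sum>l\<in>B. int (s l) * f l)" for f x
    unfolding A(1) using A(2,3) by (subst sum.insert) (auto intro!: sum.cong)
  then have "measure_pmf.expectation (int_grid q A) (\<lambda>f. real_of_int (f k) * ?c (\<Sum>l\<in>A. int (s l) * f l))
      = (\<Sum>x\<in>centered q. real_of_int x * real_of_int (centered_mod g (int (s k) * x))) / real q"
    unfolding A(1) using A(2,3) by (simp add: expectation_int_grid_insert assms(1) conditional)
  also have "\<bar>\<dots>\<bar> \<le> real q * (real g ^ 2 - 1) / 12 / real q"
    unfolding abs_divide abs_of_nat using abs_sum_centered_mul_centered_mod_dvd_le[OF assms(1), of g "s k"]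
    by (intro divide_right_mono) (simp_all add: g_def)
  also have "\<dots> \<le> real g ^ 2 / 12"
    using assms(1) by (simp add: odd_pos)
  finally show ?thesis unfolding g_def B_def .
qed

section \<open>Rounding the grid variables\<close>

lemma unif_grid_eq:
  assumes "odd q"
  shows "unif_grid q = map_pmf (\<lambda>j. real_of_int j / real q) (pmf_of_set (centered q))"
proof -
  have "{real_of_int k / real q | k. \<bar>k\<bar> \<le> (int q - 1) div 2} = (\<lambda>j. real_of_int j / real q) ` centered q"
    by (auto simp: mem_centered_iff radius_def)
  moreover have "inj_on (\<lambda>j. real_of_int j / real q) (centered q)"
    using assms by (auto simp: inj_on_def odd_pos)
  ultimately show ?thesis
    unfolding unif_grid_def using centered_nonempty[OF assms] by (simp add: map_pmf_of_set_inj)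
qed

lemma expectation_iid_grid:
  assumes "odd q"
  shows "measure_pmf.expectation (iid_grid q n) (F :: _ \<Rightarrow> real)
       = measure_pmf.expectation (int_grid q {..<n}) (\<lambda>f. F (\<lambda>j. real_of_int (f j) / real q))"
proof -
  have "iid_grid q n = map_pmf (\<lambda>f. (\<lambda>j. real_of_int j / real q) \<circ> f) (int_grid q {..<n})"
    unfolding iid_grid_def int_grid_def unif_grid_eq[OF assms] by (rule Pi_pmf_map) simp_all
  then show ?thesis by (simp add: comp_def)
qed

lemma nint_divide:
  assumes "odd q"
  shows "real_of_int (nint (real_of_int K / real q)) = (real_of_int K - real_of_int (centered_mod q K)) / real q"
proof -
  define c where "c = centered_mod q K"
  obtain m where "K - c = int q * m"
    using centered_mod_dvd_diff[of q K] unfolding c_def by (elim dvdE)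
  then have K: "real_of_int K = real_of_int c + real q * real_of_int m"
    by (metis diff_add_cancel add.commute of_int_add of_int_mult of_int_of_nat_eq)
  have q: "real q > 0" using assms by (simp add: odd_pos)
  have "\<bar>real_of_int c\<bar> \<le> real_of_int (radius q)"
    using centered_mod_in_centered[OF assms] unfolding c_def mem_centered_iff by (metis of_int_abs of_int_le_iff)
  moreover have "real q = 2 * real_of_int (radius q) + 1"
    using radius_odd[OF assms] by (metis of_int_of_nat_eq of_int_add of_int_mult of_int_1 of_int_numeral)
  ultimately have "\<bar>real_of_int c / real q\<bar> < 1 / 2"
    using q by (simp add: abs_divide divide_simps)
  then have bounds: "- 1 / 2 < real_of_int c / real q" "real_of_int c / real q < 1 / 2"
    by (simp_all only: abs_less_iff) linarith+
  have "real_of_int K / real q = real_of_int c / real q + real_of_int m"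
    using q unfolding K by (simp add: field_simps)
  then have "nint (real_of_int K / real q) = m"
    unfolding nint_def by (intro floor_unique) (use bounds in linarith)+
  then show ?thesis
    using q unfolding c_def[symmetric] K by (simp add: field_simps)
qed

lemma expectation_nint_sq_gap:
  fixes q n :: nat and s :: "nat \<Rightarrow> nat"
  assumes "odd q"
  defines "X \<equiv> \<lambda>\<xi>::nat \<Rightarrow> real. \<Sum>k<n. real (s k) * \<xi> k"
    and "c \<equiv> \<lambda>f. real_of_int (centered_mod q (\<Sum>k<n. int (s k) * f k))"
  shows "measure_pmf.expectation (iid_grid q n) (\<lambda>\<xi>. (real_of_int (nint (X \<xi>)))\<^sup>2)
           - (measure_pmf.expectation (iid_grid q n) (\<lambda>\<xi>. (X \<xi>)\<^sup>2) + 1/12)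
       = - (real (gcd (Gcd (s ` {..<n})) q) ^ 2 / 12
             + 2 * (\<Sum>k<n. real (s k) * measure_pmf.expectation (int_grid q {..<n}) (\<lambda>f. real_of_int (f k) * c f)))
           / real q ^ 2"
proof -
  define P where "P = int_grid q {..<n}"
  define K where "K f = (\<Sum>k<n. real (s k) * real_of_int (f k))" for f :: "nat \<Rightarrow> int"
  have q: "real q > 0" using assms(1) by (simp add: odd_pos)
  have integrable: "integrable (measure_pmf P) F" for F :: "_ \<Rightarrow> real"
    unfolding P_def by (rule integrable_measure_pmf_finite[OF finite_set_int_grid[OF _ assms(1)]]) simp
  have X: "X (\<lambda>j. real_of_int (f j) / real q) = K f / real q" for f
    unfolding X_def K_def by (simp add: sum_divide_distrib)
  have nint: "real_of_int (nint (K f / real q)) = (K f - c f) / real q" for f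
    using nint_divide[OF assms(1), of "\<Sum>k<n. int (s k) * f k"] unfolding K_def c_def by simp
  have pointwise: "((K f - c f) / real q)\<^sup>2 - (K f / real q)\<^sup>2
      = (c f ^ 2 - 2 * (\<Sum>k<n. real (s k) * (real_of_int (f k) * c f))) / real q ^ 2" for f
  proof -
    have "((A - C) / real q)\<^sup>2 - (A / real q)\<^sup>2 = (C ^ 2 - 2 * (A * C)) / real q ^ 2" for A C :: real
      using q by (simp add: field_simps power2_eq_square)
    moreover have "K f * c f = (\<Sum>k<n. real (s k) * (real_of_int (f k) * c f))"
      unfolding K_def by (simp add: sum_distrib_right mult.assoc)
    ultimately show ?thesis by simp
  qed
  have "measure_pmf.expectation (iid_grid q n) (\<lambda>\<xi>. (real_of_int (nint (X \<xi>)))\<^sup>2)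
        - measure_pmf.expectation (iid_grid q n) (\<lambda>\<xi>. (X \<xi>)\<^sup>2)
      = measure_pmf.expectation P (\<lambda>f. (c f ^ 2 - 2 * (\<Sum>k<n. real (s k) * (real_of_int (f k) * c f))) / real q ^ 2)"
    unfolding expectation_iid_grid[OF assms(1)] P_def[symmetric] X nint
    by (simp add: integrable flip: pointwise)
  also have "\<dots> = (measure_pmf.expectation P (\<lambda>f. c f ^ 2)
      - 2 * (\<Sum>k<n. real (s k) * measure_pmf.expectation P (\<lambda>f. real_of_int (f k) * c f))) / real q ^ 2"
    by (simp add: integrable integral_sum)
  also have "measure_pmf.expectation P (\<lambda>f. c f ^ 2) = (real q ^ 2 - real (gcd (Gcd (s ` {..<n})) q) ^ 2) / 12"
    unfolding P_def c_def by (simp add: expectation_int_grid_centered_mod_sq[OF assms(1)])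
  finally show ?thesis unfolding P_def using q by (simp add: field_simps)
qed

lemma sum_lessThan_rotate: "(\<Sum>k<n. h (Suc k mod n)) = (\<Sum>k<n. h k :: 'a::comm_monoid_add)"
proof (cases n)
  case (Suc m)
  have "(\<Sum>k<m. h (Suc k mod n)) = (\<Sum>k<m. h (Suc k))"
    unfolding Suc by (rule sum.cong) simp_all
  then have "(\<Sum>k<n. h (Suc k mod n)) = (\<Sum>k<m. h (Suc k)) + h 0"
    unfolding Suc by (simp add: sum.lessThan_Suc)
  also have "\<dots> = (\<Sum>k<n. h k)"
    unfolding Suc by (subst sum.lessThan_Suc_shift) (simp add: add.commute)
  finally show ?thesis .
qed simp

lemma sum_power_le_of_dvd_Gcd_others:
  fixes s g :: "nat \<Rightarrow> nat"
  assumes "n \<ge> 2" "\<And>k. k < n \<Longrightarrow> s k > 0" "\<And>k. k < n \<Longrightarrow> g k dvd Gcd (s ` ({..<n} - {k}))"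
  shows "(\<Sum>k<n. g k ^ p) \<le> (\<Sum>k<n. s k ^ p)"
proof -
  have "g k \<le> s (Suc k mod n)" if k: "k < n" for k
  proof -
    have "Suc k mod n \<in> {..<n} - {k}"
      using k assms(1) by (cases "Suc k = n") auto
    then have "g k dvd s (Suc k mod n)"
      using assms(3)[OF k] by (meson Gcd_dvd dvd_trans image_eqI)
    then show ?thesis using assms(2)[of "Suc k mod n"] k by (simp add: dvd_imp_le)
  qed
  then have "(\<Sum>k<n. g k ^ p) \<le> (\<Sum>k<n. s (Suc k mod n) ^ p)"
    by (intro sum_mono power_mono) auto
  then show ?thesis using sum_lessThan_rotate[of "\<lambda>k. s k ^ p" n] by simp
qed

lemma abs_sum_mult_le_sum_cubes:
  fixes a b t :: "'i \<Rightarrow> real"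
  assumes "(\<Sum>i\<in>I. b i ^ 3) \<le> (\<Sum>i\<in>I. a i ^ 3)"
    and "\<And>i. i \<in> I \<Longrightarrow> 0 \<le> a i" "\<And>i. i \<in> I \<Longrightarrow> 0 \<le> b i"
    and "\<And>i. i \<in> I \<Longrightarrow> \<bar>t i\<bar> \<le> b i ^ 2"
  shows "\<bar>\<Sum>i\<in>I. a i * t i\<bar> \<le> (\<Sum>i\<in>I. a i ^ 3)"
proof -
  have "\<bar>\<Sum>i\<in>I. a i * t i\<bar> \<le> (\<Sum>i\<in>I. a i ^ 3 / 3 + 2 * b i ^ 3 / 3)"
  proof (intro order_trans[OF sum_abs] sum_mono)
    fix i assume i: "i \<in> I"
    have "\<bar>a i * t i\<bar> \<le> a i * b i ^ 2"
      using mult_left_mono[OF assms(4)[OF i] assms(2)[OF i]] assms(2)[OF i] by (simp add: abs_mult)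
    moreover have "0 \<le> (a i - b i) ^ 2 * (a i + 2 * b i)"
      using assms(2,3)[OF i] by simp
    ultimately show "\<bar>a i * t i\<bar> \<le> a i ^ 3 / 3 + 2 * b i ^ 3 / 3"
      by (simp add: power2_eq_square power3_eq_cube algebra_simps)
  qed
  also have "\<dots> = (\<Sum>i\<in>I. a i ^ 3) / 3 + 2 * (\<Sum>i\<in>I. b i ^ 3) / 3"
    by (simp add: sum.distrib sum_divide_distrib sum_distrib_left)
  finally show ?thesis using assms(1) by linarith
qed

lemma gcd_Gcd_le_Min:
  fixes s :: "nat \<Rightarrow> nat"
  assumes "finite A" "A \<noteq> {}" "\<And>k. k \<in> A \<Longrightarrow> s k > 0"
  shows "gcd (Gcd (s ` A)) q \<le> Min (s ` A)"
proof -
  have "Min (s ` A) \<in> s ` A" using assms(1,2) by (intro Min_in) auto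
  then obtain k where k: "k \<in> A" "s k = Min (s ` A)" by auto
  have "gcd (Gcd (s ` A)) q dvd s k"
    using k(1) by (meson Gcd_dvd dvd_trans gcd_dvd1 image_eqI)
  then show ?thesis using assms(3)[OF k(1)] k(2) by (simp add: dvd_imp_le)
qed

lemma one_plus_Min_sq_le_sum_cubes:
  fixes s :: "nat \<Rightarrow> nat"
  assumes "n \<ge> 2" "\<And>k. k < n \<Longrightarrow> s k > 0"
  shows "1 + Min (s ` {..<n}) ^ 2 \<le> (\<Sum>k<n. s k ^ 3)"
proof -
  have "Min (s ` {..<n}) \<in> s ` {..<n}" by (intro Min_in) (use assms(1) in \<open>auto simp: lessThan_empty_iff\<close>)
  then obtain k where k: "k < n" "s k = Min (s ` {..<n})" by auto
  define l :: nat where "l = (if k = 0 then 1 else 0)"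
  have l: "l < n" "l \<noteq> k" using assms(1) unfolding l_def by auto
  have "Min (s ` {..<n}) ^ 2 \<le> s k ^ 3"
    using assms(2)[OF k(1)] unfolding k(2)[symmetric] by (intro power_increasing) simp_all
  moreover have "1 \<le> s l ^ 3" using assms(2)[OF l(1)] by simp
  moreover have "s k ^ 3 + s l ^ 3 \<le> (\<Sum>k<n. s k ^ 3)"
    using sum_mono2[of "{..<n}" "{k, l}" "\<lambda>k. s k ^ 3"] k(1) l by simp
  ultimately show ?thesis by linarith
qed

lemma abs_sum_cross_moments_le:
  fixes q n :: nat and s :: "nat \<Rightarrow> nat"
  assumes "odd q" "n \<ge> 2" "\<And>k. k < n \<Longrightarrow> s k > 0"
  shows "\<bar>\<Sum>k<n. real (s k) * measure_pmf.expectation (int_grid q {..<n})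
            (\<lambda>f. real_of_int (f k) * real_of_int (centered_mod q (\<Sum>l<n. int (s l) * f l)))\<bar>
       \<le> (\<Sum>k<n. real (s k) ^ 3) / 12"
proof -
  define g where "g k = gcd (Gcd (s ` ({..<n} - {k}))) q" for k
  define t where "t k = measure_pmf.expectation (int_grid q {..<n})
    (\<lambda>f. real_of_int (f k) * real_of_int (centered_mod q (\<Sum>l<n. int (s l) * f l)))" for k
  have "(\<Sum>k<n. real (g k) ^ 3) \<le> (\<Sum>k<n. real (s k) ^ 3)"
    using sum_power_le_of_dvd_Gcd_others[OF assms(2,3), where g = g and p = 3] unfolding g_def
    by (simp flip: of_nat_power of_nat_sum)
  moreover have "\<bar>12 * t k\<bar> \<le> real (g k) ^ 2" if "k < n" for k
    using abs_expectation_int_grid_coord_centered_mod_le[OF assms(1), of "{..<n}" k s] that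
    unfolding t_def g_def by simp
  ultimately have "\<bar>\<Sum>k<n. real (s k) * (12 * t k)\<bar> \<le> (\<Sum>k<n. real (s k) ^ 3)"
    by (intro abs_sum_mult_le_sum_cubes) auto
  moreover have "(\<Sum>k<n. real (s k) * (12 * t k)) = 12 * (\<Sum>k<n. real (s k) * t k)"
    by (simp add: sum_distrib_left mult.left_commute)
  ultimately show ?thesis unfolding t_def by simp
qed

theorem mainTheorem7:
  fixes q n :: nat and s :: "nat \<Rightarrow> nat"
  assumes "odd q" and "n \<ge> 2" and "\<And>k. k < n \<Longrightarrow> s k > 0"
  defines "X \<equiv> (\<lambda>\<xi>::nat \<Rightarrow> real. \<Sum>k<n. real (s k) * \<xi> k)"
  shows "\<bar>measure_pmf.expectation (iid_grid q n) (\<lambda>\<xi>. (real_of_int (nint (X \<xi>)))\<^sup>2)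
            - (measure_pmf.expectation (iid_grid q n) (\<lambda>\<xi>. (X \<xi>)\<^sup>2) + 1/12)\<bar>
          \<le> (1 + (\<Sum>k<n. real (s k) ^ 3) + real (Min (s ` {..<n})) ^ 2) / (6 * real q ^ 2)
       \<and> (1 + (\<Sum>k<n. real (s k) ^ 3) + real (Min (s ` {..<n})) ^ 2) / (6 * real q ^ 2)
          \<le> (\<Sum>k<n. real (s k) ^ 3) / (3 * real q ^ 2)"
proof -
  define S where "S = (\<Sum>k<n. real (s k) ^ 3)"
  define m where "m = Min (s ` {..<n})"
  define d where "d = gcd (Gcd (s ` {..<n})) q"
  define A where "A = (\<Sum>k<n. real (s k) * measure_pmf.expectation (int_grid q {..<n})
    (\<lambda>f. real_of_int (f k) * real_of_int (centered_mod q (\<Sum>l<n. int (s l) * f l))))"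
  have gap: "measure_pmf.expectation (iid_grid q n) (\<lambda>\<xi>. (real_of_int (nint (X \<xi>)))\<^sup>2)
      - (measure_pmf.expectation (iid_grid q n) (\<lambda>\<xi>. (X \<xi>)\<^sup>2) + 1/12)
      = - (real d ^ 2 / 12 + 2 * A) / real q ^ 2"
    unfolding X_def d_def A_def by (rule expectation_nint_sq_gap[OF assms(1)])
  have "\<bar>A\<bar> \<le> S / 12"
    unfolding A_def S_def by (rule abs_sum_cross_moments_le[OF assms(1-3)])
  moreover have "real d ^ 2 \<le> real m ^ 2"
    unfolding d_def m_def of_nat_power[symmetric] of_nat_le_iff
    by (intro power_mono gcd_Gcd_le_Min) (use assms(2,3) in \<open>auto simp: lessThan_empty_iff\<close>)
  ultimately have "\<bar>real d ^ 2 / 12 + 2 * A\<bar> \<le> (1 + S + real m ^ 2) / 6"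
    using zero_le_power2[of "real d"] zero_le_power2[of "real m"] by argo
  moreover have "1 + real m ^ 2 \<le> S"
    using of_nat_mono[OF one_plus_Min_sq_le_sum_cubes[of n s, OF assms(2,3)], where 'a = real]
    unfolding S_def m_def by simp
  ultimately show ?thesis
    unfolding gap S_def[symmetric] m_def[symmetric] using assms(1)
    by (auto simp: abs_divide divide_simps odd_pos)
qed

end
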